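(* There is a constant $c$ depending only on $\Gamma$ and $B$ such that for every open ball $C\subset B$ and every $f\in L^\infty(B)$, $$\|Y_Cf\|_{L^2(\mathcal{R}_B)}\le c\,(\mathrm{rad}(B)-\mathrm{rad}(C))^{1/2}\,\|f\|_{L^\infty(B)},$$ where $Y_C=D-D_C=1_{\mathcal{R}_B\setminus\mathcal{R}_C}D$.
   Context: $B\subset\mathbb{R}^3$ is an open ball centred at the origin; $\Gamma\subset\mathbb{R}^3$ is a $C^\infty$ curve of finite length $L$, parametrized by arclength $t\mapsto\gamma(t)$, not intersecting $\overline{B}$. The cone-beam transform of $f\in L^\infty(B)$ (extended by zero outside $B$) is $Df(a,\theta)=\int_0^\infty f(a+t\theta)\,dt$. For an open ball $C$, $\mathcal{R}_C=\{(a,\theta):a\in\Gamma,\ \theta\in S^2,\ \{a+t\theta:t\ge0\}\cap C\neq\emptyset\}$; $\mathcal{R}_B$ is defined likewise, with volume element $dt\,d\theta$ ($t$ arclength on $\Gamma$, $d\theta$ surface measure on $S^2$). The $C$-truncated cone-beam transform is $D_C=1_{\mathcal{R}_C}D$, viewed as a function on $\mathcal{R}_B$; $\mathrm{rad}(\cdot)$ denotes radius. *)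

theory Defs
  imports "HOL-Probability.Probability"
begin

type_synonym pt = "real^3"

definition smooth_on :: "real set \<Rightarrow> (real \<Rightarrow> pt) \<Rightarrow> bool" where
  "smooth_on S g \<longleftrightarrow> (\<exists>d :: nat \<Rightarrow> real \<Rightarrow> pt. d 0 = g \<and>
      (\<forall>k. \<forall>t\<in>S. (d k has_vector_derivative d (Suc k) t) (at t within S)))"

text \<open>Surface measure on the unit sphere S^2 (cone measure):
  sigma(A) = 3 * lebesgue{x in unit ball : x/|x| in A}.\<close>
definition sphere_measure :: "pt measure" where
  "sphere_measure = distr (density lborel (\<lambda>x. 3 * indicator (ball 0 1) x)) borel
                          (\<lambda>x. x /\<^sub>R norm x)"

definition cone_beam :: "pt set \<Rightarrow> (pt \<Rightarrow> real) \<Rightarrow> pt \<Rightarrow> pt \<Rightarrow> real" where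
  "cone_beam B f a \<theta> = (LINT s:{0..}|lborel. indicator B (a + s *\<^sub>R \<theta>) * f (a + s *\<^sub>R \<theta>))"

definition ray_set :: "(real \<Rightarrow> pt) \<Rightarrow> real \<Rightarrow> pt set \<Rightarrow> (pt \<times> pt) set" where
  "ray_set \<gamma> L C = {(a, \<theta>). a \<in> \<gamma> ` {0..L} \<and> \<theta> \<in> sphere 0 1 \<and> (\<exists>s\<ge>0. a + s *\<^sub>R \<theta> \<in> C)}"

text \<open>Y_C f = 1_{R_B \ R_C} D f, as function of (arclength parameter t, direction theta).\<close>
definition Y_trunc :: "(real \<Rightarrow> pt) \<Rightarrow> real \<Rightarrow> pt set \<Rightarrow> pt set \<Rightarrow> (pt \<Rightarrow> real) \<Rightarrow> real \<times> pt \<Rightarrow> real" where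
  "Y_trunc \<gamma> L B C f = (\<lambda>(t, \<theta>). indicator (ray_set \<gamma> L B - ray_set \<gamma> L C) (\<gamma> t, \<theta>)
                                  * cone_beam B f (\<gamma> t) \<theta>)"

definition L2_sq_RB :: "real \<Rightarrow> (real \<times> pt \<Rightarrow> real) \<Rightarrow> ennreal" where
  "L2_sq_RB L g = (\<integral>\<^sup>+ p. ennreal ((g p)\<^sup>2) \<partial>(lebesgue_on {0..L} \<Otimes>\<^sub>M sphere_measure))"

definition Linf_norm :: "pt set \<Rightarrow> (pt \<Rightarrow> real) \<Rightarrow> ereal" where
  "Linf_norm B f = esssup (lebesgue_on B) (\<lambda>x. ereal \<bar>f x\<bar>)"

end

theory Submission
  imports Defs "HOL-Real_Asymp.Real_Asymp"
begin

text \<open>If the ray from a source \<open>a\<close> in direction \<open>\<theta>\<close> misses \<open>C\<close>, then \<open>Y\<^sub>Cf(a,\<theta>)\<close> integrates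
  \<open>f\<close> only over the part of the ray in \<open>B - C\<close>, which has length at most \<open>A + R\<close> where
  \<open>A = max \<parallel>\<gamma>\<parallel>\<close>; by Cauchy-Schwarz, \<open>\<bar>Y\<^sub>Cf(a,\<theta>)\<bar>\<^sup>2\<close> is at most \<open>A + R\<close> times the ray integral
  of \<open>k = 1\<^bsub>B-C\<^esub> f\<^sup>2\<close>. Since \<open>\<Gamma>\<close> stays at distance \<open>\<delta> > 0\<close> from \<open>B\<close>, integrating this ray
  integral over all directions gives at most \<open>3/(2\<delta>\<^sup>2) \<integral>k\<close> (polar coordinates around \<open>a\<close>). Finally
  \<open>\<integral>k \<le> \<parallel>f\<parallel>\<^sub>\<infinity>\<^sup>2 |B - C| = \<parallel>f\<parallel>\<^sub>\<infinity>\<^sup>2 |B\<^sub>1| (R\<^sup>3 - r\<^sup>3) \<le> 3 R\<^sup>2 |B\<^sub>1| (R - r) \<parallel>f\<parallel>\<^sub>\<infinity>\<^sup>2\<close>.\<close>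

lemma nn_integral_inverse_cube_atLeast:
  fixes \<delta> :: real
  assumes "\<delta> > 0"
  shows "(\<integral>\<^sup>+x\<in>{\<delta>..}. ennreal (1 / x^3) \<partial>lborel) = ennreal (1 / (2 * \<delta>^2))"
proof -
  have "(\<integral>\<^sup>+x\<in>{\<delta>..}. ennreal (1 / x^3) \<partial>lborel) = ennreal (0 - (-1 / (2 * \<delta>^2)))"
  proof (rule nn_integral_FTC_atLeast[where F = "\<lambda>x. -1 / (2 * x^2)"])
    fix x assume "\<delta> \<le> x"
    then have "x > 0" using assms by auto
    then show "((\<lambda>x. -1 / (2 * x^2)) has_real_derivative 1 / x^3) (at x)" and "0 \<le> 1 / x^3"
      by (auto intro!: derivative_eq_intros simp: field_simps power2_eq_square power3_eq_cube)
  next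
    show "((\<lambda>x::real. -1 / (2 * x^2)) \<longlongrightarrow> 0) at_top" by real_asymp
  qed simp
  then show ?thesis by simp
qed

lemma nn_integral_lborel_dilation:
  fixes k :: "'a::euclidean_space \<Rightarrow> ennreal" and \<tau> :: real
  assumes [measurable]: "k \<in> borel_measurable borel" and "\<tau> > 0"
  shows "(\<integral>\<^sup>+x. k (a + \<tau> *\<^sub>R x) \<partial>lborel) = ennreal (1 / \<tau>^DIM('a)) * (\<integral>\<^sup>+y. k y \<partial>lborel)"
proof -
  have "(\<integral>\<^sup>+y. k y \<partial>lborel) = ennreal (\<tau>^DIM('a)) * (\<integral>\<^sup>+x. k (a + \<tau> *\<^sub>R x) \<partial>lborel)"
    using assms(2)
    by (subst lborel_affine[of \<tau> a]) (simp_all add: nn_integral_density nn_integral_distr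
        ennreal_power nn_integral_cmult)
  moreover have "ennreal (1 / \<tau>^DIM('a)) * ennreal (\<tau>^DIM('a)) = 1"
    using assms(2) by (simp add: ennreal_mult''[symmetric])
  ultimately show ?thesis by (simp add: mult.assoc[symmetric])
qed

lemma ball_in_borel [measurable]: "ball (c::'a::euclidean_space) r \<in> sets borel"
  by simp

lemma sets_sphere_measure [measurable_cong]: "sets sphere_measure = sets borel"
  by (simp add: sphere_measure_def)

lemma finite_measure_sphere_measure: "finite_measure sphere_measure"
proof (rule finite_measureI)
  have "emeasure sphere_measure (space sphere_measure)
      = emeasure (density lborel (\<lambda>x. 3 * indicator (ball (0::pt) 1) x)) UNIV"
    by (simp add: sphere_measure_def emeasure_distr)
  also have "\<dots> = 3 * emeasure lborel (ball (0::pt) 1)"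
    by (simp add: emeasure_density nn_integral_cmult_indicator)
  finally show "emeasure sphere_measure (space sphere_measure) \<noteq> \<infinity>"
    using emeasure_lborel_ball_finite[of "0::pt" 1] by (simp add: ennreal_mult_eq_top_iff)
qed

lemma nn_integral_sphere_measure:
  assumes [measurable]: "G \<in> borel_measurable borel"
  shows "(\<integral>\<^sup>+\<theta>. G \<theta> \<partial>sphere_measure)
           = (\<integral>\<^sup>+x. 3 * indicator (ball 0 1) x * G (x /\<^sub>R norm x) \<partial>lborel)"
  unfolding sphere_measure_def
  by (subst nn_integral_distr, measurable, subst nn_integral_density, measurable)

lemma nn_integral_ray_normalized_le:
  fixes k :: "'a::euclidean_space \<Rightarrow> ennreal"
  assumes [measurable]: "k \<in> borel_measurable borel" and "x \<noteq> 0" "norm x \<le> 1"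
  shows "(\<integral>\<^sup>+s. indicator {0..} s * k (a + s *\<^sub>R (x /\<^sub>R norm x)) \<partial>lborel)
           \<le> (\<integral>\<^sup>+\<tau>. indicator {0..} \<tau> * k (a + \<tau> *\<^sub>R x) \<partial>lborel)"
    (is "?G \<le> ?H")
proof -
  define c where "c = norm x"
  have c: "c > 0" "c \<le> 1" using assms(2,3) by (auto simp: c_def)
  have "?G = ennreal \<bar>c\<bar> * (\<integral>\<^sup>+\<tau>. indicator {0..} (0 + c * \<tau>) * k (a + (0 + c * \<tau>) *\<^sub>R (x /\<^sub>R c)) \<partial>lborel)"
    unfolding c_def[symmetric] by (rule nn_integral_real_affine) (measurable, use c in simp)
  also have "(\<lambda>\<tau>. indicator {0..} (0 + c * \<tau>) * k (a + (0 + c * \<tau>) *\<^sub>R (x /\<^sub>R c)))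
      = (\<lambda>\<tau>. indicator {0..} \<tau> * k (a + \<tau> *\<^sub>R x))"
    using c by (auto simp: fun_eq_iff indicator_def zero_le_mult_iff field_simps)
  finally show ?thesis
    using c mult_right_mono[of "ennreal c" 1 ?H] by (simp add: ennreal_le_1)
qed

lemma nn_integral_ball_dilation_le:
  fixes k :: "pt \<Rightarrow> ennreal"
  assumes [measurable]: "k \<in> borel_measurable borel" and "\<delta> > 0"
    and vanish: "\<And>y. y \<in> ball a \<delta> \<Longrightarrow> k y = 0"
  shows "(\<integral>\<^sup>+x. indicator {0..} \<tau> * indicator (ball 0 1) x * k (a + \<tau> *\<^sub>R x) \<partial>lborel)
           \<le> (\<integral>\<^sup>+y. k y \<partial>lborel) * (ennreal (1 / \<tau>^3) * indicator {\<delta>..} \<tau>)"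
proof (cases "\<tau> < \<delta>")
  case True
  have "k (a + \<tau> *\<^sub>R x) = 0" if "0 \<le> \<tau>" "x \<in> ball 0 1" for x
  proof (rule vanish)
    have "norm (\<tau> *\<^sub>R x) \<le> \<tau>" using that by (auto simp: mult_left_le)
    then show "a + \<tau> *\<^sub>R x \<in> ball a \<delta>" using True by (simp add: dist_norm)
  qed
  then have "(\<lambda>x. indicator {0..} \<tau> * indicator (ball 0 1) x * k (a + \<tau> *\<^sub>R x)) = (\<lambda>x. 0)"
    by (auto simp: fun_eq_iff indicator_def)
  then show ?thesis by simp
next
  case False
  then have "\<tau> > 0" using assms(2) by auto
  have "(\<integral>\<^sup>+x. indicator {0..} \<tau> * indicator (ball 0 1) x * k (a + \<tau> *\<^sub>R x) \<partial>lborel)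
      \<le> (\<integral>\<^sup>+x. k (a + \<tau> *\<^sub>R x) \<partial>lborel)"
    by (rule nn_integral_mono) (auto simp: indicator_def)
  also have "\<dots> = ennreal (1 / \<tau>^3) * (\<integral>\<^sup>+y. k y \<partial>lborel)"
    using nn_integral_lborel_dilation[OF assms(1) \<open>\<tau> > 0\<close>] by simp
  finally show ?thesis using False by (simp add: mult.commute)
qed

text \<open>Polar coordinates: \<open>sphere_measure\<close> is the pushforward of \<open>3 \<cdot> 1\<^bsub>ball 0 1\<^esub>\<close> under
  \<open>x \<mapsto> x / \<parallel>x\<parallel>\<close>, so after substituting \<open>s = \<tau> \<parallel>x\<parallel>\<close> and exchanging the integrals, the
  \<open>\<tau>\<close>-slice has mass at most \<open>\<tau>\<^sup>-\<^sup>3 \<integral>k\<close>, and none for \<open>\<tau> < \<delta>\<close>.\<close>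
lemma sphere_ray_nn_integral_le:
  fixes k :: "pt \<Rightarrow> ennreal"
  assumes [measurable]: "k \<in> borel_measurable borel" and "\<delta> > 0"
    and vanish: "\<And>y. y \<in> ball a \<delta> \<Longrightarrow> k y = 0"
  shows "(\<integral>\<^sup>+\<theta>. (\<integral>\<^sup>+s. indicator {0..} s * k (a + s *\<^sub>R \<theta>) \<partial>lborel) \<partial>sphere_measure)
           \<le> ennreal (3 / (2 * \<delta>^2)) * (\<integral>\<^sup>+y. k y \<partial>lborel)"
proof -
  define H where "H = (\<lambda>(x::pt) (\<tau>::real). indicator {0..} \<tau> * indicator (ball 0 1) x * k (a + \<tau> *\<^sub>R x))"
  define K where "K = (\<integral>\<^sup>+y. k y \<partial>lborel)"
  have "case_prod H \<in> borel_measurable (borel \<Otimes>\<^sub>M borel)" unfolding H_def by measurable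
  then have H_meas: "case_prod H \<in> borel_measurable (lborel \<Otimes>\<^sub>M lborel)"
    by (simp add: measurable_cong_sets[OF sets_pair_measure_cong[OF sets_lborel sets_lborel] refl])
  have "(\<integral>\<^sup>+\<theta>. (\<integral>\<^sup>+s. indicator {0..} s * k (a + s *\<^sub>R \<theta>) \<partial>lborel) \<partial>sphere_measure)
      = (\<integral>\<^sup>+x. 3 * indicator (ball 0 1) x
            * (\<integral>\<^sup>+s. indicator {0..} s * k (a + s *\<^sub>R (x /\<^sub>R norm x)) \<partial>lborel) \<partial>lborel)"
    by (rule nn_integral_sphere_measure) measurable
  also have "\<dots> \<le> (\<integral>\<^sup>+x. 3 * (\<integral>\<^sup>+\<tau>. H x \<tau> \<partial>lborel) \<partial>lborel)"
  proof (rule nn_integral_mono)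
    fix x :: pt
    consider "x \<notin> ball 0 1" | "x = 0" | "x \<in> ball 0 1" "x \<noteq> 0" by blast
    then show "3 * indicator (ball 0 1) x * (\<integral>\<^sup>+s. indicator {0..} s * k (a + s *\<^sub>R (x /\<^sub>R norm x)) \<partial>lborel)
        \<le> 3 * (\<integral>\<^sup>+\<tau>. H x \<tau> \<partial>lborel)"
    proof cases
      case 2
      have "k a = 0" using vanish \<open>\<delta> > 0\<close> by simp
      then show ?thesis using 2 by simp
    next
      case 3
      then show ?thesis
        using nn_integral_ray_normalized_le[OF assms(1), of x a]
        by (auto simp: H_def intro: mult_left_mono)
    qed simp
  qed
  also have "\<dots> = 3 * (\<integral>\<^sup>+\<tau>. (\<integral>\<^sup>+x. H x \<tau> \<partial>lborel) \<partial>lborel)"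
    using H_meas by (simp add: nn_integral_cmult lborel_pair.Fubini'[OF H_meas])
  also have "\<dots> \<le> 3 * (\<integral>\<^sup>+\<tau>. K * (ennreal (1 / \<tau>^3) * indicator {\<delta>..} \<tau>) \<partial>lborel)"
    unfolding H_def K_def
    by (intro mult_left_mono nn_integral_mono nn_integral_ball_dilation_le[OF assms]) auto
  also have "\<dots> = 3 * (K * ennreal (1 / (2 * \<delta>^2)))"
    by (simp add: nn_integral_cmult nn_integral_inverse_cube_atLeast[OF \<open>\<delta> > 0\<close>])
  also have "\<dots> = ennreal (3 / (2 * \<delta>^2)) * K"
    using ennreal_mult[of 3 "1 / (2 * \<delta>^2)"] by (simp add: mult_ac)
  finally show ?thesis unfolding K_def .
qed

lemma ray_integral_square_le:
  fixes h :: "real \<Rightarrow> real"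
  assumes [measurable]: "h \<in> borel_measurable borel" and "T \<ge> 0"
    and vanish: "\<And>s. s > T \<Longrightarrow> h s = 0"
  shows "ennreal ((LINT s:{0..}|lborel. h s)^2)
           \<le> ennreal T * (\<integral>\<^sup>+s. indicator {0..} s * ennreal ((h s)^2) \<partial>lborel)"
proof -
  define g where "g = (\<lambda>s. indicator {0..} s *\<^sub>R h s)"
  have [measurable]: "g \<in> borel_measurable borel" unfolding g_def by measurable
  have integral_g: "(LINT s:{0..}|lborel. h s) = integral\<^sup>L lborel g"
    by (simp add: set_lebesgue_integral_def g_def)
  show ?thesis
  proof (cases "integrable lborel g")
    case False
    then show ?thesis by (simp add: integral_g not_integrable_integral_eq)
  next
    case True
    have "\<bar>integral\<^sup>L lborel g\<bar> \<le> integral\<^sup>L lborel (\<lambda>s. \<bar>g s\<bar>)"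
      by (rule integral_abs_bound)
    then have "ennreal ((integral\<^sup>L lborel g)^2) \<le> ennreal ((integral\<^sup>L lborel (\<lambda>s. \<bar>g s\<bar>))^2)"
      by (intro ennreal_leI) (metis abs_ge_zero power2_abs power_mono)
    also have "\<dots> = (ennreal (integral\<^sup>L lborel (\<lambda>s. \<bar>g s\<bar>)))^2"
      by (simp add: ennreal_power)
    also have "ennreal (integral\<^sup>L lborel (\<lambda>s. \<bar>g s\<bar>)) = (\<integral>\<^sup>+s. ennreal \<bar>g s\<bar> * indicator {0..T} s \<partial>lborel)"
      using True by (subst nn_integral_eq_integral[symmetric])
        (auto intro!: nn_integral_cong simp: g_def indicator_def vanish)
    also have "(\<dots>)^2 \<le> (\<integral>\<^sup>+s. (ennreal \<bar>g s\<bar>)^2 \<partial>lborel) * (\<integral>\<^sup>+s. (indicator {0..T} s)^2 \<partial>lborel)"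
      by (rule Cauchy_Schwarz_nn_integral) measurable
    also have "(\<integral>\<^sup>+s. ((indicator {0..T} s)::ennreal)^2 \<partial>lborel) = ennreal T"
    proof -
      have "(\<lambda>s. ((indicator {0..T} s)::ennreal)^2) = indicator {0..T}"
        by (simp add: fun_eq_iff indicator_def)
      then show ?thesis using \<open>T \<ge> 0\<close> by simp
    qed
    also have "(\<integral>\<^sup>+s. (ennreal \<bar>g s\<bar>)^2 \<partial>lborel) = (\<integral>\<^sup>+s. indicator {0..} s * ennreal ((h s)^2) \<partial>lborel)"
      by (rule nn_integral_cong) (auto simp: g_def indicator_def ennreal_power)
    finally show ?thesis by (simp add: integral_g mult.commute)
  qed
qed

lemma emeasure_lebesgue_ball:
  assumes "0 \<le> \<rho>"
  shows "emeasure lebesgue (ball (c::pt) \<rho>) = ennreal (\<rho>^3 * measure lborel (ball (0::pt) 1))"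
proof -
  have "emeasure lebesgue (ball c \<rho>) = ennreal (measure lborel (ball c \<rho>))"
    using emeasure_lborel_ball_finite[of c \<rho>] by (simp add: emeasure_eq_ennreal_measure)
  then show ?thesis using content_ball_conv_unit_ball[OF assms, of c] by simp
qed

lemma ball_subset_ball_radius_le:
  fixes x y :: "'a::euclidean_space"
  assumes "ball x r \<subseteq> ball y R" "0 < r"
  shows "r \<le> R"
proof -
  have "dist x y + r \<le> R"
    using assms ball_subset_ball_iff[of x r y R] by (auto simp: dist_commute)
  then show ?thesis using zero_le_dist[of x y] by linarith
qed

lemma emeasure_lebesgue_ball_diff:
  assumes "ball x0 r \<subseteq> ball (0::pt) R" "0 < r"
  shows "emeasure lebesgue (ball 0 R - ball x0 r) = ennreal ((R^3 - r^3) * measure lborel (ball (0::pt) 1))"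
proof -
  have "r \<le> R" using assms by (rule ball_subset_ball_radius_le)
  have "emeasure lebesgue (ball 0 R - ball x0 r) = emeasure lebesgue (ball (0::pt) R) - emeasure lebesgue (ball x0 r)"
    by (rule emeasure_Diff) (use assms emeasure_lborel_ball_finite[of x0 r] in auto)
  also have "\<dots> = ennreal (R^3 * measure lborel (ball (0::pt) 1)) - ennreal (r^3 * measure lborel (ball (0::pt) 1))"
    using emeasure_lebesgue_ball[of R 0] emeasure_lebesgue_ball[of r x0] \<open>r \<le> R\<close> assms(2) by simp
  also have "\<dots> = ennreal ((R^3 - r^3) * measure lborel (ball (0::pt) 1))"
    using assms(2) by (simp add: ennreal_minus left_diff_distrib)
  finally show ?thesis .
qed

lemma nn_integral_square_le_Linf_norm:
  assumes "Linf_norm B f < \<infinity>" "B \<in> sets lebesgue" "S \<subseteq> B" "S \<in> sets lebesgue"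
  shows "(\<integral>\<^sup>+y. ennreal (indicator S y * (f y)^2) \<partial>lborel)
           \<le> ennreal ((real_of_ereal (Linf_norm B f))^2) * emeasure lebesgue S"
proof -
  define M where "M = real_of_ereal (Linf_norm B f)"
  have "AE x in lebesgue_on B. ereal \<bar>f x\<bar> \<le> Linf_norm B f"
    unfolding Linf_norm_def by (rule esssup_AE)
  then have "AE x in lebesgue_on B. \<bar>f x\<bar> \<le> M"
    by (rule eventually_mono) (use assms(1) in \<open>cases "Linf_norm B f", auto simp: M_def\<close>)
  then have bound: "AE x in lebesgue. x \<in> B \<longrightarrow> \<bar>f x\<bar> \<le> M"
    using assms(2) by (subst (asm) AE_restrict_space_iff) auto
  have "(\<integral>\<^sup>+y. ennreal (indicator S y * (f y)^2) \<partial>lborel)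
      = (\<integral>\<^sup>+y. ennreal (indicator S y * (f y)^2) \<partial>lebesgue)"
    by (simp add: nn_integral_completion)
  also have "\<dots> \<le> (\<integral>\<^sup>+y. ennreal (M^2) * indicator S y \<partial>lebesgue)"
    using bound
  proof (intro nn_integral_mono_AE, eventually_elim)
    case (elim y)
    show ?case
    proof (cases "y \<in> S")
      case True
      then have "\<bar>f y\<bar> \<le> M" using elim assms(3) by auto
      then have "(f y)^2 \<le> M^2" by (metis abs_ge_zero power2_abs power_mono)
      then show ?thesis using True by (simp add: ennreal_leI)
    qed simp
  qed
  also have "\<dots> = ennreal (M^2) * emeasure lebesgue S"
    using assms(4) by (rule nn_integral_cmult_indicator)
  finally show ?thesis unfolding M_def .
qed

lemma cube_diff_le:
  fixes r R :: real
  assumes "0 \<le> r" "r \<le> R"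
  shows "R^3 - r^3 \<le> 3 * R^2 * (R - r)"
proof -
  have "R * r \<le> R * R" "r * r \<le> R * R" using assms by (auto intro: mult_mono)
  then have "R^2 + R * r + r^2 \<le> 3 * R^2" by (simp add: power2_eq_square)
  then have "(R - r) * (R^2 + R * r + r^2) \<le> (R - r) * (3 * R^2)"
    using assms(2) by (intro mult_left_mono) auto
  then show ?thesis by (simp add: algebra_simps power2_eq_square power3_eq_cube)
qed

lemma smooth_on_imp_continuous_on: "smooth_on S g \<Longrightarrow> continuous_on S g"
  unfolding smooth_on_def continuous_on_eq_continuous_within
  by (metis has_vector_derivative_continuous)

lemma compact_image_avoiding_cball_bounds:
  fixes \<gamma> :: "'a::topological_space \<Rightarrow> 'b::real_normed_vector"
  assumes "compact S" "S \<noteq> {}" "continuous_on S \<gamma>" "\<forall>t\<in>S. \<gamma> t \<notin> cball 0 R"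
  obtains \<delta> A where "\<delta> > 0" "\<And>t. t \<in> S \<Longrightarrow> R + \<delta> \<le> norm (\<gamma> t) \<and> norm (\<gamma> t) \<le> A"
proof -
  have norm_cont: "continuous_on S (\<lambda>t. norm (\<gamma> t))"
    using assms(3) by (intro continuous_intros)
  obtain t0 where "t0 \<in> S" and t0: "\<And>t. t \<in> S \<Longrightarrow> norm (\<gamma> t0) \<le> norm (\<gamma> t)"
    using continuous_attains_inf[OF assms(1,2) norm_cont] by auto
  obtain t1 where t1: "\<And>t. t \<in> S \<Longrightarrow> norm (\<gamma> t) \<le> norm (\<gamma> t1)"
    using continuous_attains_sup[OF assms(1,2) norm_cont] by auto
  have "norm (\<gamma> t0) - R > 0" using assms(4) \<open>t0 \<in> S\<close> by auto
  then show ?thesis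
    using t0 t1 by (intro that[of "norm (\<gamma> t0) - R" "norm (\<gamma> t1)"]) auto
qed

text \<open>On a ray that misses \<open>C\<close> only \<open>B - C\<close> contributes to the cone-beam integral, and
  from a source with \<open>norm a \<le> A\<close> the ray has left \<open>B\<close> after parameter \<open>A + R\<close>; then apply
  Cauchy-Schwarz on \<open>[0, A + R]\<close>.\<close>
lemma Y_trunc_square_le:
  fixes f :: "pt \<Rightarrow> real"
  assumes [measurable]: "f \<in> borel_measurable borel" "C \<in> sets borel"
    and "0 \<le> R" "norm (\<gamma> t) \<le> A"
  shows "ennreal ((Y_trunc \<gamma> L (ball 0 R) C f (t, \<theta>))^2)
           \<le> ennreal (A + R) * (\<integral>\<^sup>+s. indicator {0..} s
                 * ennreal (indicator (ball 0 R - C) (\<gamma> t + s *\<^sub>R \<theta>) * (f (\<gamma> t + s *\<^sub>R \<theta>))^2) \<partial>lborel)"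
proof (cases "(\<gamma> t, \<theta>) \<in> ray_set \<gamma> L (ball 0 R) - ray_set \<gamma> L C")
  case False
  then show ?thesis by (simp add: Y_trunc_def)
next
  case True
  define a where "a = \<gamma> t"
  have "norm \<theta> = 1" and misses_C: "\<And>s. 0 \<le> s \<Longrightarrow> a + s *\<^sub>R \<theta> \<notin> C"
    using True unfolding ray_set_def a_def by auto
  define h where "h = (\<lambda>s. indicator (ball 0 R - C) (a + s *\<^sub>R \<theta>) * f (a + s *\<^sub>R \<theta>))"
  have cone_beam_eq: "cone_beam (ball 0 R) f a \<theta> = (LINT s:{0..}|lborel. h s)"
    unfolding cone_beam_def h_def
    by (rule set_lebesgue_integral_cong) (auto simp: indicator_def misses_C)
  have h_vanish: "h s = 0" if "s > A + R" for s
  proof -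
    have "s \<le> norm (a + s *\<^sub>R \<theta>) + norm a"
      using norm_triangle_ineq4[of "a + s *\<^sub>R \<theta>" a] \<open>norm \<theta> = 1\<close> that assms(3,4) by (simp add: a_def)
    then have "R < norm (a + s *\<^sub>R \<theta>)" using that assms(4) by (simp add: a_def)
    then show ?thesis by (simp add: h_def indicator_def)
  qed
  have "0 \<le> A + R" using assms(3,4) norm_ge_zero[of "\<gamma> t"] by linarith
  have "ennreal ((LINT s:{0..}|lborel. h s)^2)
      \<le> ennreal (A + R) * (\<integral>\<^sup>+s. indicator {0..} s * ennreal ((h s)^2) \<partial>lborel)"
    by (rule ray_integral_square_le) (use \<open>0 \<le> A + R\<close> h_vanish in \<open>auto simp: h_def\<close>)
  also have "(\<integral>\<^sup>+s. indicator {0..} s * ennreal ((h s)^2) \<partial>lborel)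
      = (\<integral>\<^sup>+s. indicator {0..} s
           * ennreal (indicator (ball 0 R - C) (a + s *\<^sub>R \<theta>) * (f (a + s *\<^sub>R \<theta>))^2) \<partial>lborel)"
    by (rule nn_integral_cong) (simp add: h_def indicator_def power_mult_distrib)
  finally show ?thesis
    using True by (simp add: Y_trunc_def cone_beam_eq[unfolded a_def] a_def)
qed

lemma L2_sq_RB_Y_trunc_le:
  fixes \<gamma> :: "real \<Rightarrow> pt" and f :: "pt \<Rightarrow> real"
  assumes "0 \<le> L" "0 \<le> R" "\<delta> > 0" "continuous_on {0..L} \<gamma>"
    and curve_bounds: "\<And>t. t \<in> {0..L} \<Longrightarrow> R + \<delta> \<le> norm (\<gamma> t) \<and> norm (\<gamma> t) \<le> A"
    and [measurable]: "C \<in> sets borel" "f \<in> borel_measurable borel"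
  shows "L2_sq_RB L (Y_trunc \<gamma> L (ball 0 R) C f)
           \<le> ennreal (L * (A + R) * (3 / (2 * \<delta>^2)))
               * (\<integral>\<^sup>+y. ennreal (indicator (ball 0 R - C) y * (f y)^2) \<partial>lborel)"
proof -
  define k where "k = (\<lambda>y. ennreal (indicator (ball 0 R - C) y * (f y)^2))"
  define K where "K = (\<integral>\<^sup>+y. k y \<partial>lborel)"
  define X where "X = (\<lambda>t \<theta>. \<integral>\<^sup>+s. indicator {0..} s * k (\<gamma> t + s *\<^sub>R \<theta>) \<partial>lborel)"
  have [measurable]: "k \<in> borel_measurable borel" unfolding k_def by measurable
  have [measurable]: "\<gamma> \<in> borel_measurable (lebesgue_on {0..L})"
    using assms(4) by (rule continuous_imp_measurable_on_sets_lebesgue) simp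
  interpret sphere: finite_measure sphere_measure by (rule finite_measure_sphere_measure)
  have "A + R \<ge> 0" using curve_bounds[of 0] assms(1-3) by fastforce
  have "L2_sq_RB L (Y_trunc \<gamma> L (ball 0 R) C f)
      \<le> (\<integral>\<^sup>+p. ennreal (A + R) * X (fst p) (snd p) \<partial>(lebesgue_on {0..L} \<Otimes>\<^sub>M sphere_measure))"
    unfolding L2_sq_RB_def X_def k_def
    by (intro nn_integral_mono)
      (auto simp: space_pair_measure intro!: Y_trunc_square_le[OF assms(7,6,2)] dest: curve_bounds)
  also have "\<dots> = (\<integral>\<^sup>+t. (\<integral>\<^sup>+\<theta>. ennreal (A + R) * X t \<theta> \<partial>sphere_measure) \<partial>lebesgue_on {0..L})"
  proof -
    have "(\<lambda>p. ennreal (A + R) * X (fst p) (snd p)) \<in> borel_measurable (lebesgue_on {0..L} \<Otimes>\<^sub>M sphere_measure)"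
      unfolding X_def by measurable
    from sphere.nn_integral_fst[OF this] show ?thesis by simp
  qed
  also have "\<dots> \<le> (\<integral>\<^sup>+t. ennreal (A + R) * (ennreal (3 / (2 * \<delta>^2)) * K) \<partial>lebesgue_on {0..L})"
  proof (rule nn_integral_mono)
    fix t assume "t \<in> space (lebesgue_on {0..L})"
    then have vanish: "k y = 0" if "y \<in> ball (\<gamma> t) \<delta>" for y
      using curve_bounds[of t] that norm_triangle_ineq3[of "\<gamma> t" y]
      by (auto simp: k_def indicator_def dist_norm)
    have "(\<integral>\<^sup>+\<theta>. ennreal (A + R) * X t \<theta> \<partial>sphere_measure)
        = ennreal (A + R) * (\<integral>\<^sup>+\<theta>. X t \<theta> \<partial>sphere_measure)"
      unfolding X_def by (rule nn_integral_cmult) measurable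
    also have "\<dots> \<le> ennreal (A + R) * (ennreal (3 / (2 * \<delta>^2)) * K)"
      unfolding X_def K_def
      by (intro mult_left_mono sphere_ray_nn_integral_le[OF _ \<open>\<delta> > 0\<close> vanish]) auto
    finally show "(\<integral>\<^sup>+\<theta>. ennreal (A + R) * X t \<theta> \<partial>sphere_measure)
        \<le> ennreal (A + R) * (ennreal (3 / (2 * \<delta>^2)) * K)" .
  qed
  also have "\<dots> = ennreal (L * (A + R) * (3 / (2 * \<delta>^2))) * K"
    using assms(1) \<open>A + R \<ge> 0\<close>
    by (simp add: emeasure_restrict_space ennreal_mult'[symmetric] mult_ac)
  finally show ?thesis unfolding K_def k_def .
qed

lemma nn_integral_shell_square_le:
  fixes f :: "pt \<Rightarrow> real"
  assumes "ball x0 r \<subseteq> ball 0 R" "0 < r" "Linf_norm (ball 0 R) f < \<infinity>"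
  shows "(\<integral>\<^sup>+y. ennreal (indicator (ball 0 R - ball x0 r) y * (f y)^2) \<partial>lborel)
           \<le> ennreal (3 * R^2 * measure lborel (ball (0::pt) 1) * (R - r)
                       * (real_of_ereal (Linf_norm (ball 0 R) f))^2)"
proof -
  define M where "M = real_of_ereal (Linf_norm (ball 0 R) f)"
  define U where "U = measure lborel (ball (0::pt) 1)"
  have "r \<le> R" using assms(1,2) by (rule ball_subset_ball_radius_le)
  have "(\<integral>\<^sup>+y. ennreal (indicator (ball 0 R - ball x0 r) y * (f y)^2) \<partial>lborel)
      \<le> ennreal (M^2) * ennreal ((R^3 - r^3) * U)"
    using nn_integral_square_le_Linf_norm[OF assms(3), of "ball 0 R - ball x0 r"]
      emeasure_lebesgue_ball_diff[OF assms(1,2)]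
    by (auto simp: M_def U_def)
  also have "\<dots> = ennreal ((R^3 - r^3) * U * M^2)"
    using \<open>r \<le> R\<close> assms(2) by (simp add: ennreal_mult'[symmetric] power_mono mult_ac U_def)
  also have "\<dots> \<le> ennreal (3 * R^2 * (R - r) * U * M^2)"
    using cube_diff_le[OF less_imp_le[OF assms(2)] \<open>r \<le> R\<close>]
    by (intro ennreal_leI mult_right_mono) (auto simp: U_def)
  finally show ?thesis by (simp add: M_def U_def mult_ac)
qed

theorem mainTheorem5:
  fixes \<gamma> :: "real \<Rightarrow> real^3" and L R :: real
  assumes "R > 0" and "L > 0"
    and "smooth_on {0..L} \<gamma>"
    and "\<forall>t\<in>{0..L}. norm (vector_derivative \<gamma> (at t within {0..L})) = 1"
    and "\<forall>t\<in>{0..L}. \<gamma> t \<notin> cball 0 R"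
  shows "\<exists>c::real. \<forall>(x0::real^3) (r::real) (f::real^3 \<Rightarrow> real).
           r > 0 \<longrightarrow> ball x0 r \<subseteq> ball 0 R \<longrightarrow> f \<in> borel_measurable borel \<longrightarrow>
           Linf_norm (ball 0 R) f < \<infinity> \<longrightarrow>
           L2_sq_RB L (Y_trunc \<gamma> L (ball 0 R) (ball x0 r) f)
             \<le> ennreal ((c * (R - r) powr (1/2) * real_of_ereal (Linf_norm (ball 0 R) f))\<^sup>2)"
proof -
  have cont: "continuous_on {0..L} \<gamma>"
    using assms(3) by (rule smooth_on_imp_continuous_on)
  obtain \<delta> A where "\<delta> > 0" and bounds: "\<And>t. t \<in> {0..L} \<Longrightarrow> R + \<delta> \<le> norm (\<gamma> t) \<and> norm (\<gamma> t) \<le> A"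
    using compact_image_avoiding_cball_bounds[OF compact_Icc _ cont assms(5)] assms(2) by auto
  define a where "a = L * (A + R) * (3 / (2 * \<delta>^2))"
  define b where "b = 3 * R^2 * measure lborel (ball (0::pt) 1)"
  have "a \<ge> 0" "b \<ge> 0" using bounds[of 0] assms(1,2) \<open>\<delta> > 0\<close> by (fastforce simp: a_def b_def)+
  show ?thesis
  proof (intro exI[of _ "sqrt (a * b)"] allI impI)
    fix x0 :: pt and r :: real and f :: "pt \<Rightarrow> real"
    assume "r > 0" and sub: "ball x0 r \<subseteq> ball 0 R" and [measurable]: "f \<in> borel_measurable borel"
      and Linf: "Linf_norm (ball 0 R) f < \<infinity>"
    define M where "M = real_of_ereal (Linf_norm (ball 0 R) f)"
    have "r \<le> R" using sub \<open>r > 0\<close> by (rule ball_subset_ball_radius_le)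
    have "L2_sq_RB L (Y_trunc \<gamma> L (ball 0 R) (ball x0 r) f)
        \<le> ennreal a * (\<integral>\<^sup>+y. ennreal (indicator (ball 0 R - ball x0 r) y * (f y)^2) \<partial>lborel)"
      unfolding a_def using assms(1,2) \<open>\<delta> > 0\<close> cont bounds
      by (intro L2_sq_RB_Y_trunc_le) auto
    also have "\<dots> \<le> ennreal a * ennreal (b * (R - r) * M^2)"
      using nn_integral_shell_square_le[OF sub \<open>r > 0\<close> Linf] by (simp add: M_def b_def mult_left_mono)
    also have "\<dots> = ennreal ((sqrt (a * b) * (R - r) powr (1/2) * M)^2)"
      using \<open>a \<ge> 0\<close> \<open>b \<ge> 0\<close> \<open>r \<le> R\<close>
      by (simp add: ennreal_mult'[symmetric] power_mult_distrib powr_half_sqrt mult_ac)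
    finally show "L2_sq_RB L (Y_trunc \<gamma> L (ball 0 R) (ball x0 r) f)
        \<le> ennreal ((sqrt (a * b) * (R - r) powr (1/2) * M)^2)" .
  qed
qed

end
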